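(* Let $1\le k\le n-1$, $d=n-1$, $h=1$, $\alpha=M/k$, and $\beta=\alpha'=\frac{M}{k(d-k+2)}$ (assumed a positive integer). Then, for a sufficiently large finite field $\mathrm{GF}(q)$, there exist linear codes for the system $\mathrm{DSS}(n,k,d,1,\alpha,\alpha',\beta,M)$ (linear storage codes on the complete nodes and on the repairing node, and linear repair combinations) such that, when a complete node fails and each of the $d$ surviving complete nodes and the repairing node transmits $\beta$ packets to the new node, the reconstruction property is preserved: any $k$ complete nodes of the resulting system can recover the file.
   Context: $\mathrm{DSS}(n,k,d,h,\alpha,\alpha',\beta,M)$: a file of $M$ packets over $\mathrm{GF}(q)$ is stored on $n$ complete storage nodes of capacity $\alpha$ each (each node stores $\alpha$ linear combinations of the file packets) so that any $k$ of them reconstruct the file (reconstruction property); in addition there are $h$ repairing storage nodes of capacity $\alpha'<\alpha$, which are never contacted by data collectors. When a complete node fails, a new node is created from $\beta$ packets (linear combinations of stored data) received from each of $d$ surviving complete nodes and from each of the $h$ repairing nodes; repair is functional (the new node need not equal the failed one). *)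

theory Defs
  imports "HOL-Algebra.Ring"
begin

text \<open>A packet / stored symbol is represented by its coefficient vector
  with respect to the M file packets: a function nat => 'a, only indices below M matter.\<close>

type_synonym 'a cvec = "nat \<Rightarrow> 'a"

definition in_span :: "('a, 'b) ring_scheme \<Rightarrow> nat \<Rightarrow> 'a cvec set \<Rightarrow> 'a cvec \<Rightarrow> bool" where
  "in_span R M A u \<longleftrightarrow>
     (\<exists>ws c. set ws \<subseteq> A \<and> (\<forall>t<length ws. c t \<in> carrier R) \<and>
        (\<forall>j<M. u j = finsum R (\<lambda>t. c t \<otimes>\<^bsub>R\<^esub> (ws ! t) j) {..<length ws}))"

definition is_vec :: "('a, 'b) ring_scheme \<Rightarrow> nat \<Rightarrow> 'a cvec \<Rightarrow> bool" where
  "is_vec R M v \<longleftrightarrow> (\<forall>j<M. v j \<in> carrier R)"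

definition reconstructs :: "('a, 'b) ring_scheme \<Rightarrow> nat \<Rightarrow> nat \<Rightarrow> nat \<Rightarrow> (nat \<Rightarrow> 'a cvec list) \<Rightarrow> bool" where
  "reconstructs R M n k nodes \<longleftrightarrow>
     (\<forall>S. S \<subseteq> {..<n} \<longrightarrow> card S = k \<longrightarrow>
        (\<forall>v. is_vec R M v \<longrightarrow> in_span R M (\<Union>i\<in>S. set (nodes i)) v))"

definition storage_ok :: "('a, 'b) ring_scheme \<Rightarrow> nat \<Rightarrow> nat \<Rightarrow> nat \<Rightarrow> (nat \<Rightarrow> 'a cvec list) \<Rightarrow> bool" where
  "storage_ok R M n alpha nodes \<longleftrightarrow>
     (\<forall>i<n. length (nodes i) = alpha \<and> (\<forall>v\<in>set (nodes i). is_vec R M v))"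

definition repair_step ::
  "('a, 'b) ring_scheme \<Rightarrow> nat \<Rightarrow> nat \<Rightarrow> nat \<Rightarrow> nat \<Rightarrow> 'a cvec list \<Rightarrow>
   (nat \<Rightarrow> 'a cvec list) \<Rightarrow> nat \<Rightarrow> (nat \<Rightarrow> 'a cvec list) \<Rightarrow> bool" where
  "repair_step R M n alpha beta rep nodes f nodes' \<longleftrightarrow>
     f < n \<and> (\<forall>i. i \<noteq> f \<longrightarrow> nodes' i = nodes i) \<and>
     (\<exists>msg :: nat \<Rightarrow> 'a cvec list. \<exists>rmsg :: 'a cvec list.
        (\<forall>i<n. i \<noteq> f \<longrightarrow> length (msg i) = beta \<and>
            (\<forall>u\<in>set (msg i). in_span R M (set (nodes i)) u)) \<and>
        length rmsg = beta \<and> (\<forall>u\<in>set rmsg. in_span R M (set rep) u) \<and>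
        length (nodes' f) = alpha \<and>
        (\<forall>u\<in>set (nodes' f).
           in_span R M ((\<Union>i\<in>{..<n} - {f}. set (msg i)) \<union> set rmsg) u))"

fun run :: "((nat \<Rightarrow> 'a cvec list) \<Rightarrow> nat \<Rightarrow> (nat \<Rightarrow> 'a cvec list)) \<Rightarrow>
            (nat \<Rightarrow> 'a cvec list) \<Rightarrow> nat list \<Rightarrow> (nat \<Rightarrow> 'a cvec list)" where
  "run strat s [] = s"
| "run strat s (f # fs) = run strat (strat s f) fs"

end

theory Submission
  imports Defs "Jordan_Normal_Form.Missing_VectorSpace"
begin

text \<open>The code is kept in an admissible state: for
  every set \<open>X\<close> of at most \<open>k\<close> complete nodes, the vectors stored on \<open>X\<close>, together with the
  \<open>beta\<close> vectors of the repairing node when \<open>card X < k\<close>, are linearly independent and as many as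
  possible. For \<open>card X = k\<close> these are \<open>k * alpha = M\<close> independent vectors, which gives the
  reconstruction property.

  Admissible states are built, and rebuilt after every failure, by choosing vectors one at a time
  generically: each new vector has to avoid at most \<open>2 ^ n\<close> proper subspaces of the space it is
  taken from, which is possible over a field with more than \<open>2 ^ n\<close> elements. A repair has two
  rounds. The helpers first send messages such that for every set \<open>X\<close> of \<open>k - 2\<close> or \<open>k - 1\<close>
  surviving nodes, the vectors on \<open>X\<close> and on the repairing node together with the messages of the
  other helpers are independent; the new node then stores combinations of the received packets
  that are independent of the vectors on \<open>X\<close> (and on the repairing node, if \<open>card X = k - 2\<close>).
  Since \<open>alpha = (n - k + 1) * beta\<close> the ranks in both rounds match exactly.\<close>

section \<open>Generic choice of linearly independent vectors\<close>

context vectorspace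
begin

lemma card_le_card_if_lin_indpt_subset_span:
  assumes "finite G" "finite Y" "Y \<subseteq> carrier V" "lin_indpt G" "G \<subseteq> span Y"
  shows "card G \<le> card Y"
  using replacement[OF assms] by fastforce

lemma lin_indpt_insert_if_not_in_span:
  assumes "Y \<subseteq> carrier V" "lin_indpt Y" "v \<in> carrier V" "v \<notin> span Y"
  shows "lin_indpt (insert v Y)" and "v \<notin> Y"
proof -
  show "v \<notin> Y" using assms in_own_span by blast
  then show "lin_indpt (insert v Y)"
    using lin_dep_iff_in_span[OF assms(1-3)] assms(4) by simp
qed

lemma submodule_add_cancel:
  assumes Z: "submodule K Z V" and "z \<in> Z" "w \<in> carrier V" "z \<oplus>\<^bsub>V\<^esub> w \<in> Z"
  shows "w \<in> Z"
proof -
  have ZV: "Z \<subseteq> carrier V" using Z by (rule submodule.subset)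
  have "span Z = Z" using span_is_subset[OF subset_refl Z] in_own_span[OF ZV] by blast
  then show ?thesis using span_add[OF ZV] assms by metis
qed

lemma span_carrier: "span (carrier V) = carrier V"
  using span_is_subset2[OF subset_refl] in_own_span[OF subset_refl] by blast

lemma submodule_meets_line_at_most_once:
  assumes Z: "submodule K Z V" and x: "x \<in> carrier V" "x \<notin> Z" and y: "y \<in> carrier V"
    and c: "c \<in> carrier K" and d: "d \<in> carrier K"
    and yc: "y \<oplus>\<^bsub>V\<^esub> c \<odot>\<^bsub>V\<^esub> x \<in> Z" and yd: "y \<oplus>\<^bsub>V\<^esub> d \<odot>\<^bsub>V\<^esub> x \<in> Z"
  shows "c = d"
proof (rule ccontr)
  assume "c \<noteq> d"
  define e where "e = d \<oplus>\<^bsub>K\<^esub> \<ominus>\<^bsub>K\<^esub> c"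
  have e: "e \<in> carrier K" unfolding e_def using c d by simp
  have "c \<oplus>\<^bsub>K\<^esub> e = d"
    unfolding e_def using c d by (metis R.a_lcomm R.a_inv_closed R.r_neg R.r_zero)
  with \<open>c \<noteq> d\<close> have e_nz: "e \<noteq> \<zero>\<^bsub>K\<^esub>" using c by auto
  have "y \<oplus>\<^bsub>V\<^esub> d \<odot>\<^bsub>V\<^esub> x = y \<oplus>\<^bsub>V\<^esub> (c \<oplus>\<^bsub>K\<^esub> e) \<odot>\<^bsub>V\<^esub> x"
    using \<open>c \<oplus>\<^bsub>K\<^esub> e = d\<close> by simp
  also have "\<dots> = (y \<oplus>\<^bsub>V\<^esub> c \<odot>\<^bsub>V\<^esub> x) \<oplus>\<^bsub>V\<^esub> e \<odot>\<^bsub>V\<^esub> x"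
    using x y c e by (simp only: smult_l_distr M.a_assoc smult_closed)
  finally have "e \<odot>\<^bsub>V\<^esub> x \<in> Z"
    using submodule_add_cancel[OF Z yc _] yd x e by simp
  then have "inv\<^bsub>K\<^esub> e \<odot>\<^bsub>V\<^esub> (e \<odot>\<^bsub>V\<^esub> x) \<in> Z"
    using e e_nz by (simp add: submodule.smult_closed[OF Z])
  then show False using mult_inverse[OF e x(1) refl e_nz] x by simp
qed

lemma ex_scalar_avoiding_submodules:
  assumes "finite F" "card F < card (carrier K)"
    and F: "\<And>Z. Z \<in> F \<Longrightarrow> submodule K Z V \<and> x \<notin> Z" and xV: "x \<in> carrier V" and yV: "y \<in> carrier V"
  shows "\<exists>c\<in>carrier K. \<forall>Z\<in>F. y \<oplus>\<^bsub>V\<^esub> c \<odot>\<^bsub>V\<^esub> x \<notin> Z"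
proof -
  have finK: "finite (carrier K)" using assms(2) card.infinite by fastforce
  define bad where "bad = (\<Union>Z\<in>F. {c \<in> carrier K. y \<oplus>\<^bsub>V\<^esub> c \<odot>\<^bsub>V\<^esub> x \<in> Z})"
  have "card {c \<in> carrier K. y \<oplus>\<^bsub>V\<^esub> c \<odot>\<^bsub>V\<^esub> x \<in> Z} \<le> 1" if "Z \<in> F" for Z
  proof -
    have "\<forall>c\<in>{c \<in> carrier K. y \<oplus>\<^bsub>V\<^esub> c \<odot>\<^bsub>V\<^esub> x \<in> Z}. \<forall>d\<in>{c \<in> carrier K. y \<oplus>\<^bsub>V\<^esub> c \<odot>\<^bsub>V\<^esub> x \<in> Z}. c = d"
      using submodule_meets_line_at_most_once[OF _ xV _ yV] F[OF that] by blast
    then show ?thesis using finK by (simp add: card_le_Suc0_iff_eq)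
  qed
  then have "card bad \<le> card F"
  proof -
    have "card bad \<le> (\<Sum>Z\<in>F. card {c \<in> carrier K. y \<oplus>\<^bsub>V\<^esub> c \<odot>\<^bsub>V\<^esub> x \<in> Z})"
      unfolding bad_def by (rule card_UN_le[OF assms(1)])
    also have "\<dots> \<le> (\<Sum>Z\<in>F. 1)" by (rule sum_mono) fact
    finally show ?thesis by simp
  qed
  moreover have "bad \<subseteq> carrier K" unfolding bad_def by blast
  ultimately have "\<not> carrier K \<subseteq> bad"
    using assms(2) card_mono[OF finite_subset[OF _ finK]] by (meson order.trans leD)
  then show ?thesis unfolding bad_def by blast
qed

lemma ex_in_submodule_avoiding_submodules:
  assumes "finite Zs" and "card Zs < card (carrier K)"
    and "\<And>Z. Z \<in> Zs \<Longrightarrow> submodule K Z V" and D: "submodule K D V"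
    and "\<And>Z. Z \<in> Zs \<Longrightarrow> \<not> D \<subseteq> Z"
  shows "\<exists>x\<in>D. \<forall>Z\<in>Zs. x \<notin> Z"
  using assms(1-3,5)
proof (induction Zs rule: finite_induct)
  case empty
  then show ?case using submodule.zero_closed[OF D] by blast
next
  case (insert Z F)
  obtain x where x: "x \<in> D" "\<forall>Z'\<in>F. x \<notin> Z'"
    using insert by fastforce
  show ?case
  proof (cases "x \<in> Z")
    case False
    then show ?thesis using x by blast
  next
    case True
    \<comment> \<open>the points \<open>y + c x\<close> all lie outside \<open>Z \<ni> x\<close>, and each \<open>Z' \<in> F\<close> contains at most one of them\<close>
    have Z: "submodule K Z V" using insert.prems by blast
    obtain y where y: "y \<in> D" "y \<notin> Z" using insert.prems by blast
    have xV: "x \<in> carrier V" and yV: "y \<in> carrier V"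
      using x(1) y(1) submodule.subset[OF D] by blast+
    have "card F < card (carrier K)" using insert.prems(1) insert.hyps by simp
    moreover have "submodule K Z' V \<and> x \<notin> Z'" if "Z' \<in> F" for Z'
      using insert.prems(2) x(2) that by blast
    ultimately obtain c where c: "c \<in> carrier K" "\<forall>Z'\<in>F. y \<oplus>\<^bsub>V\<^esub> c \<odot>\<^bsub>V\<^esub> x \<notin> Z'"
      using ex_scalar_avoiding_submodules[OF insert.hyps(1) _ _ xV yV] by blast
    have "y \<oplus>\<^bsub>V\<^esub> c \<odot>\<^bsub>V\<^esub> x \<in> D"
      using D x(1) y(1) c(1) by (simp add: submodule.m_closed submodule.smult_closed)
    moreover have "y \<oplus>\<^bsub>V\<^esub> c \<odot>\<^bsub>V\<^esub> x \<notin> Z"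
    proof
      assume "y \<oplus>\<^bsub>V\<^esub> c \<odot>\<^bsub>V\<^esub> x \<in> Z"
      moreover have "y \<oplus>\<^bsub>V\<^esub> c \<odot>\<^bsub>V\<^esub> x = c \<odot>\<^bsub>V\<^esub> x \<oplus>\<^bsub>V\<^esub> y"
        using xV yV c(1) by (simp add: M.a_comm)
      ultimately show False
        using submodule_add_cancel[OF Z _ yV] submodule.smult_closed[OF Z c(1) True] y(2) by simp
    qed
    ultimately show ?thesis using c by blast
  qed
qed

lemma not_span_subset_if_card_less:
  assumes Y: "finite Y" "Y \<subseteq> carrier V" and "B \<subseteq> Y" "P \<subseteq> carrier V"
    and G: "finite G" "lin_indpt G" "G \<subseteq> span (P \<union> B)" and "card Y < card G"
  shows "\<not> span P \<subseteq> span Y"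
proof
  assume "span P \<subseteq> span Y"
  then have "P \<union> B \<subseteq> span Y"
    using in_own_span[OF \<open>P \<subseteq> carrier V\<close>] in_own_span[OF Y(2)] \<open>B \<subseteq> Y\<close> by blast
  then have "G \<subseteq> span Y"
    using G(3) span_is_subset[OF _ span_is_submodule[OF Y(2)]] by blast
  then show False
    using card_le_card_if_lin_indpt_subset_span[OF G(1) Y(1,2) G(2)] \<open>card Y < card G\<close> by simp
qed

lemma ex_lin_indpt_insert_all:
  assumes "finite Cs" "card Cs < card (carrier K)" "P \<subseteq> carrier V"
    and Y: "\<And>c. c \<in> Cs \<Longrightarrow> Y c \<subseteq> carrier V \<and> lin_indpt (Y c) \<and> \<not> span P \<subseteq> span (Y c)"
  shows "\<exists>v\<in>span P. \<forall>c\<in>Cs. lin_indpt (insert v (Y c)) \<and> v \<notin> Y c"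
proof -
  define Zs where "Zs = (\<lambda>c. span (Y c)) ` Cs"
  have "finite Zs" unfolding Zs_def using assms(1) by simp
  moreover have "card Zs < card (carrier K)"
    unfolding Zs_def using card_image_le[OF assms(1)] assms(2) by (rule le_less_trans)
  moreover have "submodule K Z V \<and> \<not> span P \<subseteq> Z" if Z: "Z \<in> Zs" for Z
  proof -
    obtain c where "c \<in> Cs" "Z = span (Y c)" using Z unfolding Zs_def by blast
    then show ?thesis using Y[of c] span_is_submodule by simp
  qed
  ultimately obtain v where v: "v \<in> span P" "\<forall>Z\<in>Zs. v \<notin> Z"
    using ex_in_submodule_avoiding_submodules[of Zs "span P"] span_is_submodule[OF assms(3)] by blast
  have "v \<in> carrier V" using v(1) assms(3) by simp
  then have "lin_indpt (insert v (Y c)) \<and> v \<notin> Y c" if "c \<in> Cs" for c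
    using lin_indpt_insert_if_not_in_span[of "Y c" v] Y[OF that] v(2) that unfolding Zs_def by blast
  then show ?thesis using v(1) by blast
qed

lemma generic_choice_insert:
  assumes "finite L" "insert l F \<subseteq> L" "l \<notin> F" "finite Cs" "card Cs < card (carrier K)" "P \<subseteq> carrier V"
    and B: "\<And>c. c \<in> Cs \<Longrightarrow> B c \<subseteq> carrier V \<and> finite (B c) \<and> lin_indpt (B c)"
    and "ch ` F \<subseteq> carrier V"
    and indpt: "\<forall>c\<in>Cs. lin_indpt (B c \<union> ch ` (F \<inter> S c)) \<and>
                  card (B c) + card (F \<inter> S c) \<le> card (B c \<union> ch ` (F \<inter> S c))"
    and rank: "\<And>c. c \<in> Cs \<Longrightarrow> l \<in> S c \<Longrightarrow>
                 \<exists>G \<subseteq> span (P \<union> B c). finite G \<and> lin_indpt G \<and> card (B c) + card (L \<inter> S c) \<le> card G"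
  shows "\<exists>v\<in>span P. \<forall>c\<in>Cs. lin_indpt (B c \<union> (ch(l := v)) ` (insert l F \<inter> S c)) \<and>
           card (B c) + card (insert l F \<inter> S c) \<le> card (B c \<union> (ch(l := v)) ` (insert l F \<inter> S c))"
proof -
  have "F \<subseteq> L" using assms(2) by blast
  then have F: "finite F" using assms(1) by (rule finite_subset)
  define Y where "Y c = B c \<union> ch ` (F \<inter> S c)" for c
  have Y: "finite (Y c)" "Y c \<subseteq> carrier V" "B c \<subseteq> Y c" if "c \<in> Cs" for c
    using B[OF that] F assms(8) unfolding Y_def by auto
  have "Y c \<subseteq> carrier V \<and> lin_indpt (Y c) \<and> \<not> span P \<subseteq> span (Y c)" if c: "c \<in> {c\<in>Cs. l \<in> S c}" for c
  proof -
    obtain G where G: "G \<subseteq> span (P \<union> B c)" "finite G" "lin_indpt G" "card (B c) + card (L \<inter> S c) \<le> card G"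
      using rank c by blast
    have "card (Y c) \<le> card (B c) + card (F \<inter> S c)"
      unfolding Y_def using card_Un_le card_image_le[of "F \<inter> S c" ch] F
      by (meson add_left_mono finite_Int order_trans)
    also have "\<dots> < card (B c) + card (L \<inter> S c)"
      using psubset_card_mono[of "L \<inter> S c" "F \<inter> S c"] assms(1-3) c by fastforce
    finally show ?thesis
      using not_span_subset_if_card_less[OF Y[of c] assms(6) G(2,3,1)] G(4) indpt c Y(2) unfolding Y_def by auto
  qed
  moreover have "card {c\<in>Cs. l \<in> S c} < card (carrier K)"
    using card_mono[OF assms(4), of "{c\<in>Cs. l \<in> S c}"] assms(5) by auto
  ultimately obtain v where v: "v \<in> span P" "\<forall>c\<in>{c\<in>Cs. l \<in> S c}. lin_indpt (insert v (Y c)) \<and> v \<notin> Y c"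
    using ex_lin_indpt_insert_all[of "{c\<in>Cs. l \<in> S c}" P Y] assms(4,6) by auto
  have img: "(ch(l := v)) ` (F \<inter> S c) = ch ` (F \<inter> S c)" for c
    using assms(3) by auto
  have "lin_indpt (B c \<union> (ch(l := v)) ` (insert l F \<inter> S c)) \<and>
        card (B c) + card (insert l F \<inter> S c) \<le> card (B c \<union> (ch(l := v)) ` (insert l F \<inter> S c))"
    if c: "c \<in> Cs" for c
  proof (cases "l \<in> S c")
    case True
    then have "B c \<union> (ch(l := v)) ` (insert l F \<inter> S c) = insert v (Y c)"
      using img[of c] unfolding Y_def by auto
    moreover have "card (insert l F \<inter> S c) = Suc (card (F \<inter> S c))"
      using True F assms(3) by simp
    ultimately show ?thesis using v(2) c True indpt Y(1)[OF c] unfolding Y_def by simp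
  next
    case False
    then show ?thesis using indpt c img[of c] by simp
  qed
  then show ?thesis using v(1) by blast
qed

lemma generic_choice_lin_indpt:
  fixes L :: "'l set" and Cs :: "'i set" and P :: "'l \<Rightarrow> 'c set"
    and B :: "'i \<Rightarrow> 'c set" and S :: "'i \<Rightarrow> 'l set"
  assumes "finite L" and "finite Cs" and "card Cs < card (carrier K)"
    and P: "\<And>l. l \<in> L \<Longrightarrow> P l \<subseteq> carrier V"
    and B: "\<And>c. c \<in> Cs \<Longrightarrow> B c \<subseteq> carrier V \<and> finite (B c) \<and> lin_indpt (B c)"
    and rank: "\<And>c l. c \<in> Cs \<Longrightarrow> l \<in> L \<Longrightarrow> l \<in> S c \<Longrightarrow>
           \<exists>G \<subseteq> span (P l \<union> B c). finite G \<and> lin_indpt G \<and> card (B c) + card (L \<inter> S c) \<le> card G"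
  shows "\<exists>ch. (\<forall>l\<in>L. ch l \<in> span (P l)) \<and>
    (\<forall>c\<in>Cs. lin_indpt (B c \<union> ch ` (L \<inter> S c)) \<and>
             card (B c) + card (L \<inter> S c) \<le> card (B c \<union> ch ` (L \<inter> S c)))"
proof -
  have "\<exists>ch. (\<forall>l\<in>F. ch l \<in> span (P l)) \<and>
    (\<forall>c\<in>Cs. lin_indpt (B c \<union> ch ` (F \<inter> S c)) \<and>
             card (B c) + card (F \<inter> S c) \<le> card (B c \<union> ch ` (F \<inter> S c)))" if "F \<subseteq> L" for F
    using finite_subset[OF that assms(1)] that
  proof (induction F rule: finite_induct)
    case empty
    then show ?case using B by auto
  next
    case (insert l F)
    then obtain ch where ch_span: "\<forall>l\<in>F. ch l \<in> span (P l)"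
      and ch_indpt: "\<forall>c\<in>Cs. lin_indpt (B c \<union> ch ` (F \<inter> S c)) \<and>
             card (B c) + card (F \<inter> S c) \<le> card (B c \<union> ch ` (F \<inter> S c))"
      by auto
    have "ch ` F \<subseteq> carrier V" using ch_span span_closed P insert.prems by blast
    moreover have "l \<in> L" using insert.prems by blast
    ultimately obtain v where "v \<in> span (P l)"
      "\<forall>c\<in>Cs. lin_indpt (B c \<union> (ch(l := v)) ` (insert l F \<inter> S c)) \<and>
         card (B c) + card (insert l F \<inter> S c) \<le> card (B c \<union> (ch(l := v)) ` (insert l F \<inter> S c))"
      using generic_choice_insert[OF assms(1) insert.prems insert.hyps(2) assms(2,3) P B _ ch_indpt rank]
      by blast
    moreover have "\<forall>l'\<in>F. (ch(l := v)) l' \<in> span (P l')"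
      using ch_span insert.hyps(2) by auto
    ultimately show ?case by (intro exI[of _ "ch(l := v)"]) auto
  qed
  then show ?thesis by blast
qed

end

section \<open>The coordinate space\<close>

locale coordinate_space = vectorspace R V for R :: "'a ring" and V :: "('a, nat \<Rightarrow> 'a) module" +
  fixes M :: nat
  assumes V_eq: "V = ring.func_space R {..<M}"
begin

lemma carrier_V: "carrier V = {..<M} \<rightarrow>\<^sub>E carrier R"
  by (simp add: V_eq func_space_def)

lemma add_V: "x \<oplus>\<^bsub>V\<^esub> y = (\<lambda>j\<in>{..<M}. x j \<oplus>\<^bsub>R\<^esub> y j)"
  by (simp add: V_eq func_space_def)

lemma smult_V: "c \<odot>\<^bsub>V\<^esub> y = (\<lambda>j\<in>{..<M}. c \<otimes>\<^bsub>R\<^esub> y j)"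
  by (simp add: V_eq func_space_def)

lemma zero_V: "\<zero>\<^bsub>V\<^esub> = (\<lambda>j\<in>{..<M}. \<zero>\<^bsub>R\<^esub>)"
  by (simp add: V_eq func_space_def)

lemma carrier_V_apply: "v \<in> carrier V \<Longrightarrow> j < M \<Longrightarrow> v j \<in> carrier R"
  unfolding carrier_V by auto

lemma is_vec_if_carrier: "v \<in> carrier V \<Longrightarrow> is_vec R M v"
  unfolding is_vec_def using carrier_V_apply by blast

lemma finsum_apply:
  assumes "finite S" "g \<in> S \<rightarrow> carrier V" "j < M"
  shows "finsum V g S j = (\<Oplus>\<^bsub>R\<^esub>s\<in>S. g s j)"
  using assms
proof (induction S rule: finite_induct)
  case empty
  then show ?case by (simp add: zero_V)
next
  case (insert a F)
  have gF: "g \<in> F \<rightarrow> carrier V" and ga: "g a \<in> carrier V" using insert.prems by auto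
  have "(\<lambda>s. g s j) \<in> F \<rightarrow> carrier R" "g a j \<in> carrier R"
    using gF ga carrier_V_apply insert.prems(2) by auto
  then have "(\<Oplus>\<^bsub>R\<^esub>s\<in>insert a F. g s j) = g a j \<oplus>\<^bsub>R\<^esub> (\<Oplus>\<^bsub>R\<^esub>s\<in>F. g s j)"
    by (rule R.finsum_insert[OF insert.hyps])
  moreover have "finsum V g (insert a F) = g a \<oplus>\<^bsub>V\<^esub> finsum V g F"
    by (rule M.finsum_insert[OF insert.hyps gF ga])
  ultimately show ?case
    using insert.IH[OF gF insert.prems(2)] insert.prems(2) by (simp add: add_V)
qed

lemma lincomb_apply:
  assumes "finite S" "S \<subseteq> carrier V" "a \<in> S \<rightarrow> carrier R" "j < M"
  shows "lincomb a S j = (\<Oplus>\<^bsub>R\<^esub>v\<in>S. a v \<otimes>\<^bsub>R\<^esub> v j)"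
proof -
  have "(\<lambda>v. a v \<odot>\<^bsub>V\<^esub> v) \<in> S \<rightarrow> carrier V" using assms(2,3) by blast
  from finsum_apply[OF assms(1) this assms(4)] show ?thesis
    unfolding lincomb_def using assms(4) by (simp add: smult_V)
qed

lemma in_span_if_mem_span:
  assumes A: "A \<subseteq> carrier V" and u: "u \<in> span A"
  shows "in_span R M A u"
proof -
  obtain a S where aS: "u = lincomb a S" "finite S" "S \<subseteq> A" "a \<in> S \<rightarrow> carrier R"
    using u unfolding span_def by blast
  obtain ws where ws: "set ws = S" "distinct ws" using finite_distinct_list[OF aS(2)] by blast
  have SV: "S \<subseteq> carrier V" using aS(3) A by blast
  have nth_ws: "(!) ws ` {..<length ws} = S" using ws(1) by (auto simp: in_set_conv_nth)
  have "u j = (\<Oplus>\<^bsub>R\<^esub>t\<in>{..<length ws}. a (ws ! t) \<otimes>\<^bsub>R\<^esub> (ws ! t) j)" if j: "j < M" for j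
  proof -
    have "u j = (\<Oplus>\<^bsub>R\<^esub>v\<in>(!) ws ` {..<length ws}. a v \<otimes>\<^bsub>R\<^esub> v j)"
      using lincomb_apply[OF aS(2) SV aS(4) j] aS(1) nth_ws by simp
    also have "\<dots> = (\<Oplus>\<^bsub>R\<^esub>t\<in>{..<length ws}. a (ws ! t) \<otimes>\<^bsub>R\<^esub> (ws ! t) j)"
    proof (rule R.finsum_reindex)
      show "(\<lambda>v. a v \<otimes>\<^bsub>R\<^esub> v j) \<in> (!) ws ` {..<length ws} \<rightarrow> carrier R"
        unfolding nth_ws using aS(4) SV carrier_V_apply[OF _ j] by blast
      show "inj_on ((!) ws) {..<length ws}" using ws(2) by (simp add: inj_on_nth)
    qed
    finally show ?thesis .
  qed
  moreover have "\<forall>t<length ws. a (ws ! t) \<in> carrier R"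
    using aS(4) ws(1) by auto
  ultimately show ?thesis
    unfolding in_span_def using ws(1) aS(3)
    by (intro exI[of _ ws] exI[of _ "\<lambda>t. a (ws ! t)"]) blast
qed

definition unit_coord :: "nat \<Rightarrow> nat \<Rightarrow> 'a" where
  "unit_coord j = (\<lambda>i\<in>{..<M}. if i = j then \<one>\<^bsub>R\<^esub> else \<zero>\<^bsub>R\<^esub>)"

lemma unit_coord_carrier: "unit_coord j \<in> carrier V"
  unfolding carrier_V unit_coord_def by auto

lemma inj_on_unit_coord: "inj_on unit_coord {..<M}"
proof
  fix i j assume i: "i \<in> {..<M}" and "unit_coord i = unit_coord j"
  then have "unit_coord j i = unit_coord i i" by simp
  then have "(if i = j then \<one>\<^bsub>R\<^esub> else \<zero>\<^bsub>R\<^esub>) = \<one>\<^bsub>R\<^esub>"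
    using i by (simp add: unit_coord_def)
  then show "i = j" using one_not_zero by (auto split: if_splits)
qed

lemma lincomb_unit_coords_apply:
  assumes a: "a \<in> unit_coord ` {..<M} \<rightarrow> carrier R" and i: "i < M"
  shows "lincomb a (unit_coord ` {..<M}) i = a (unit_coord i)"
proof -
  have "lincomb a (unit_coord ` {..<M}) i = (\<Oplus>\<^bsub>R\<^esub>v\<in>unit_coord ` {..<M}. a v \<otimes>\<^bsub>R\<^esub> v i)"
    using lincomb_apply[OF _ _ a i] unit_coord_carrier by blast
  also have "\<dots> = (\<Oplus>\<^bsub>R\<^esub>j\<in>{..<M}. a (unit_coord j) \<otimes>\<^bsub>R\<^esub> unit_coord j i)"
  proof (rule R.finsum_reindex[OF _ inj_on_unit_coord])
    show "(\<lambda>v. a v \<otimes>\<^bsub>R\<^esub> v i) \<in> unit_coord ` {..<M} \<rightarrow> carrier R"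
      using a carrier_V_apply[OF unit_coord_carrier i] by auto
  qed
  also have "\<dots> = (\<Oplus>\<^bsub>R\<^esub>j\<in>{..<M}. if i = j then a (unit_coord j) else \<zero>\<^bsub>R\<^esub>)"
  proof -
    have "unit_coord j i = (if i = j then \<one>\<^bsub>R\<^esub> else \<zero>\<^bsub>R\<^esub>)" for j
      using i by (simp add: unit_coord_def)
    then show ?thesis using a by (intro R.finsum_cong) (auto simp: Pi_iff simp_implies_def)
  qed
  also have "\<dots> = a (unit_coord i)"
    using R.finsum_singleton[of i "{..<M}" "\<lambda>j. a (unit_coord j)"] a i by auto
  finally show ?thesis .
qed

lemma basis_unit_coords: "basis (unit_coord ` {..<M})"
  unfolding basis_def
proof (intro conjI)
  show UV: "unit_coord ` {..<M} \<subseteq> carrier V" using unit_coord_carrier by blast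
  show "lin_indpt (unit_coord ` {..<M})"
  proof (rule finite_lin_indpt2[OF _ UV])
    fix a assume a: "a \<in> unit_coord ` {..<M} \<rightarrow> carrier R" "lincomb a (unit_coord ` {..<M}) = \<zero>\<^bsub>V\<^esub>"
    show "\<forall>v\<in>unit_coord ` {..<M}. a v = \<zero>\<^bsub>R\<^esub>"
      using lincomb_unit_coords_apply[OF a(1)] a(2) by (auto simp: zero_V)
  qed simp
  show "span (unit_coord ` {..<M}) = carrier V"
  proof
    show "span (unit_coord ` {..<M}) \<subseteq> carrier V" using span_is_subset2[OF UV] .
    show "carrier V \<subseteq> span (unit_coord ` {..<M})"
    proof
      fix v assume v: "v \<in> carrier V"
      define a where "a w = v (inv_into {..<M} unit_coord w)" for w
      have a: "a \<in> unit_coord ` {..<M} \<rightarrow> carrier R"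
        using v inj_on_unit_coord carrier_V_apply unfolding a_def by auto
      have "lincomb a (unit_coord ` {..<M}) = v"
      proof (rule PiE_ext)
        show "lincomb a (unit_coord ` {..<M}) \<in> {..<M} \<rightarrow>\<^sub>E carrier R" "v \<in> {..<M} \<rightarrow>\<^sub>E carrier R"
          using lincomb_closed[OF UV a] v unfolding carrier_V by auto
        show "lincomb a (unit_coord ` {..<M}) i = v i" if "i \<in> {..<M}" for i
          using lincomb_unit_coords_apply[OF a] inj_on_unit_coord that unfolding a_def by simp
      qed
      then show "v \<in> span (unit_coord ` {..<M})" unfolding span_def using a by blast
    qed
  qed
qed

lemma dim_eq: "dim = M"
  using dim_basis[OF _ basis_unit_coords] card_image[OF inj_on_unit_coord] by simp

lemma span_eq_carrier_if_lin_indpt: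
  assumes "finite Y" "Y \<subseteq> carrier V" "lin_indpt Y" "M \<le> card Y"
  shows "span Y = carrier V"
proof -
  have "fin_dim"
    unfolding fin_dim_def using basis_unit_coords unfolding basis_def by blast
  then show ?thesis
    using dim_li_is_basis[of Y] assms dim_eq unfolding basis_def by simp
qed

lemma in_span_if_span_eq_carrier:
  assumes "span Y = carrier V" "Y \<subseteq> carrier V" "is_vec R M v"
  shows "in_span R M Y v"
proof -
  have "restrict v {..<M} \<in> carrier V" using assms(3) unfolding carrier_V is_vec_def by auto
  then have "in_span R M Y (restrict v {..<M})" using in_span_if_mem_span[OF assms(2)] assms(1) by simp
  then show ?thesis unfolding in_span_def by simp
qed

end

section \<open>The storage code and its repair\<close>

locale dss_code = coordinate_space +
  fixes n k alpha beta :: nat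
  assumes k_pos: "1 \<le> k" and k_less_n: "k < n"
    and alpha_eq: "alpha = (n - k + 1) * beta" and M_eq: "M = k * alpha"
    and field_large: "2 ^ n < card (carrier R)"
begin

definition rep :: "'a cvec list" where
  "rep = map unit_coord [0..<beta]"

definition stored :: "(nat \<Rightarrow> 'a cvec list) \<Rightarrow> nat set \<Rightarrow> 'a cvec set" where
  "stored s X = (\<Union>i\<in>X. set (s i))"

definition rep_part :: "nat set \<Rightarrow> 'a cvec set" where
  "rep_part X = (if card X < k then set rep else {})"

definition collected :: "(nat \<Rightarrow> 'a cvec list) \<Rightarrow> nat set \<Rightarrow> 'a cvec set" where
  "collected s X = rep_part X \<union> stored s X"

definition admissible :: "(nat \<Rightarrow> 'a cvec list) \<Rightarrow> bool" where
  "admissible s \<longleftrightarrow> (\<forall>i<n. length (s i) = alpha \<and> set (s i) \<subseteq> carrier V) \<and>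
     (\<forall>X\<subseteq>{..<n}. card X \<le> k \<longrightarrow>
        lin_indpt (collected s X) \<and> card (rep_part X) + card X * alpha \<le> card (collected s X))"

lemma beta_le_alpha: "beta \<le> alpha"
  using alpha_eq by simp

lemma alpha_le_M: "alpha \<le> M"
  using M_eq k_pos by simp

lemma set_rep: "set rep = unit_coord ` {..<beta}"
  by (auto simp: rep_def)

lemma length_rep: "length rep = beta"
  by (simp add: rep_def)

lemma rep_carrier: "set rep \<subseteq> carrier V"
  unfolding set_rep using unit_coord_carrier by blast

lemma rep_lin_indpt: "lin_indpt (set rep)"
  using basis_unit_coords beta_le_alpha alpha_le_M unfolding basis_def set_rep
  by (meson image_mono lessThan_subset_iff order_trans subset_li_is_li)

lemma card_rep: "card (set rep) = beta"
proof -
  have "inj_on unit_coord {..<beta}"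
    using inj_on_subset[OF inj_on_unit_coord] beta_le_alpha alpha_le_M by auto
  then show ?thesis unfolding set_rep by (simp add: card_image)
qed

lemma card_rep_part: "card (rep_part X) = (if card X < k then beta else 0)"
  by (simp add: rep_part_def card_rep)

lemma rep_part_subset: "rep_part X \<subseteq> set rep"
  by (simp add: rep_part_def)

lemma rep_part_carrier: "rep_part X \<subseteq> carrier V"
  using rep_part_subset rep_carrier by blast

lemma finite_rep_part: "finite (rep_part X)"
  by (simp add: rep_part_def)

lemma rep_part_lin_indpt: "lin_indpt (rep_part X)"
  using subset_li_is_li[OF rep_lin_indpt rep_part_subset] .

lemma card_rep_part_le_M:
  assumes "card X \<le> k"
  shows "card (rep_part X) + card X * alpha \<le> M"
proof (cases "card X < k")
  case True
  then have "alpha + card X * alpha \<le> k * alpha" using mult_le_mono1[of "card X + 1" k alpha] by simp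
  moreover have "card (rep_part X) = beta" using True by (simp add: card_rep_part)
  ultimately show ?thesis using beta_le_alpha M_eq by linarith
next
  case False
  then have "card (rep_part X) = 0" "card X = k" using assms by (simp_all add: card_rep_part)
  then show ?thesis using M_eq by simp
qed

lemma stored_insert: "stored s (insert j X) = set (s j) \<union> stored s X"
  by (simp add: stored_def)

lemma stored_fun_upd: "f \<notin> X \<Longrightarrow> stored (s(f := xs)) X = stored s X"
  unfolding stored_def by (intro SUP_cong) auto

lemma card_stored_le:
  assumes "finite X" "\<And>i. i \<in> X \<Longrightarrow> length (s i) = alpha"
  shows "card (stored s X) \<le> card X * alpha"
proof -
  have "card (stored s X) \<le> (\<Sum>i\<in>X. card (set (s i)))"
    unfolding stored_def by (rule card_UN_le[OF assms(1)])
  also have "\<dots> \<le> (\<Sum>i\<in>X. alpha)"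
    using assms(2) card_length by (intro sum_mono) fastforce
  finally show ?thesis by simp
qed

lemma stored_carrier:
  "(\<And>i. i \<in> X \<Longrightarrow> set (s i) \<subseteq> carrier V) \<Longrightarrow> stored s X \<subseteq> carrier V"
  unfolding stored_def by blast

lemma finite_stored: "finite X \<Longrightarrow> finite (stored s X)"
  unfolding stored_def by simp

lemma admissible_collected:
  assumes "admissible s" "X \<subseteq> {..<n}" "card X \<le> k"
  shows "lin_indpt (collected s X)" "card (rep_part X) + card X * alpha \<le> card (collected s X)"
    and "collected s X \<subseteq> carrier V" "finite (collected s X)"
proof -
  show "lin_indpt (collected s X)" "card (rep_part X) + card X * alpha \<le> card (collected s X)"
    using assms unfolding admissible_def by blast+
  have "set (s i) \<subseteq> carrier V" if "i \<in> X" for i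
    using assms(1,2) that unfolding admissible_def by blast
  then show "collected s X \<subseteq> carrier V"
    unfolding collected_def using rep_part_carrier stored_carrier by blast
  show "finite (collected s X)"
    unfolding collected_def using finite_rep_part finite_stored finite_subset[OF assms(2)] by blast
qed

lemma card_collected_le:
  assumes "admissible s" "X \<subseteq> {..<n}"
  shows "card (collected s X) \<le> card (rep_part X) + card X * alpha"
proof -
  have "card (stored s X) \<le> card X * alpha"
    using assms finite_subset[OF assms(2)] unfolding admissible_def by (intro card_stored_le) auto
  then show ?thesis unfolding collected_def using card_Un_le[of "rep_part X" "stored s X"] by linarith
qed

lemma admissible_card_Un_stored:
  assumes adm: "admissible s" and T: "T \<subseteq> {..<n}" "card T < k" and A: "A \<subseteq> set rep"
  shows "card A + card T * alpha \<le> card (A \<union> stored s T)"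
proof -
  have "card (rep_part T) + card T * alpha \<le> card (collected s T)"
    using adm T unfolding admissible_def by simp
  then have "beta + card T * alpha \<le> card (set rep \<union> stored s T)"
    using T(2) card_rep unfolding collected_def rep_part_def by simp
  also have "set rep \<union> stored s T = (A \<union> stored s T) \<union> (set rep - A)" using A by blast
  also have "card \<dots> \<le> card (A \<union> stored s T) + card (set rep - A)" by (rule card_Un_le)
  also have "card (set rep - A) = beta - card A"
    using A card_rep by (simp add: card_Diff_subset finite_subset)
  finally show ?thesis
    using card_mono[OF _ A] card_rep by simp
qed

lemma admissibleI:
  assumes nodes: "\<forall>i<n. length (s i) = alpha \<and> set (s i) \<subseteq> carrier V"
    and exact: "\<And>X. X \<subseteq> {..<n} \<Longrightarrow> card X \<le> k \<Longrightarrow> k \<le> card X + 1 \<Longrightarrow>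
       lin_indpt (collected s X) \<and> card (rep_part X) + card X * alpha \<le> card (collected s X)"
  shows "admissible s"
proof -
  have "lin_indpt (collected s X) \<and> card (rep_part X) + card X * alpha \<le> card (collected s X)"
    if X: "X \<subseteq> {..<n}" "card X \<le> k" for X
  proof (cases "k \<le> card X + 1")
    case True
    then show ?thesis using exact X by blast
  next
    case False
    \<comment> \<open>enlarge \<open>X\<close> to \<open>k - 1\<close> nodes, which carry the same share of the repairing node\<close>
    have "\<exists>Y. X \<subseteq> Y \<and> Y \<subseteq> {..<n} \<and> card Y = k - 1"
      by (rule exists_subset_between) (use X False k_less_n in auto)
    then obtain Y where Y: "X \<subseteq> Y" "Y \<subseteq> {..<n}" "card Y = k - 1"
      by blast
    have finY: "finite Y" using Y(2) finite_subset by blast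
    have rep_Y: "rep_part Y = rep_part X"
      using Y(3) False k_pos unfolding rep_part_def by simp
    have coll_Y: "collected s Y = collected s X \<union> stored s (Y - X)"
      unfolding collected_def stored_def rep_Y using Y(1) by blast
    have "lin_indpt (collected s Y)" "card (rep_part Y) + card Y * alpha \<le> card (collected s Y)"
      using exact[OF Y(2)] Y(3) k_pos by auto
    moreover have "card (stored s (Y - X)) \<le> card (Y - X) * alpha"
      using nodes Y(2) finY by (intro card_stored_le) auto
    moreover have "card (Y - X) * alpha + card X * alpha = card Y * alpha"
      using Y(1) finY card_Diff_subset[of X Y] card_mono[OF finY Y(1)] finite_subset[OF Y(1) finY]
      by (simp add: add_mult_distrib[symmetric])
    moreover have "card (collected s Y) \<le> card (collected s X) + card (stored s (Y - X))"
      unfolding coll_Y by (rule card_Un_le)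
    ultimately show ?thesis
      using coll_Y subset_li_is_li[of "collected s Y" "collected s X"] rep_Y by auto
  qed
  then show ?thesis unfolding admissible_def using nodes by blast
qed

lemma admissible_reconstructs:
  assumes adm: "admissible s"
  shows "reconstructs R M n k s"
  unfolding reconstructs_def
proof (intro allI impI)
  fix S v assume S: "S \<subseteq> {..<n}" "card S = k" and v: "is_vec R M v"
  have "collected s S = stored s S"
    using S(2) unfolding collected_def rep_part_def by simp
  then have S_V: "stored s S \<subseteq> carrier V"
    and "lin_indpt (stored s S)" "M \<le> card (stored s S)" "finite (stored s S)"
    using admissible_collected[OF adm S(1)] S(2) M_eq by (simp_all add: card_rep_part)
  then have "span (stored s S) = carrier V"
    using span_eq_carrier_if_lin_indpt by blast
  then show "in_span R M (\<Union>i\<in>S. set (s i)) v"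
    using in_span_if_span_eq_carrier[OF _ S_V v] unfolding stored_def by blast
qed

lemma finite_subsets_of_nodes: "A \<subseteq> {..<n} \<Longrightarrow> finite {X. X \<subseteq> A \<and> P X}"
  by (rule finite_subset[of _ "Pow {..<n}"]) auto

lemma card_subsets_of_nodes_less:
  assumes "A \<subseteq> {..<n}"
  shows "card {X. X \<subseteq> A \<and> P X} < card (carrier R)"
proof -
  have "card {X. X \<subseteq> A \<and> P X} \<le> card (Pow {..<n})"
    using assms by (intro card_mono) auto
  then show ?thesis using field_large by (simp add: card_Pow)
qed

lemma admissible_exists: "\<exists>s. admissible s"
proof -
  define L where "L = {..<n} \<times> {..<alpha}"
  define Cs where "Cs = {X. X \<subseteq> {..<n} \<and> card X \<le> k \<and> k \<le> card X + 1}"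
  have slots: "L \<inter> X \<times> {..<alpha} = X \<times> {..<alpha}" if "X \<in> Cs" for X
    using that unfolding L_def Cs_def by auto
  \<comment> \<open>every slot may range over all of \<open>carrier V\<close>, whose rank is \<open>M\<close>\<close>
  have "\<exists>G \<subseteq> span (carrier V \<union> rep_part X). finite G \<and> lin_indpt G \<and>
      card (rep_part X) + card (L \<inter> X \<times> {..<alpha}) \<le> card G" if X: "X \<in> Cs" for X
  proof (intro exI conjI)
    show "unit_coord ` {..<M} \<subseteq> span (carrier V \<union> rep_part X)"
      using unit_coord_carrier rep_part_carrier span_carrier span_is_monotone[of "carrier V"] by blast
    show "lin_indpt (unit_coord ` {..<M})" using basis_unit_coords unfolding basis_def by blast
    show "card (rep_part X) + card (L \<inter> X \<times> {..<alpha}) \<le> card (unit_coord ` {..<M})"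
      using card_rep_part_le_M[of X] X slots[OF X] card_image[OF inj_on_unit_coord]
      unfolding Cs_def by (simp add: card_cartesian_product)
  qed simp
  then obtain ch where ch: "\<forall>l\<in>L. ch l \<in> span (carrier V)"
    "\<forall>X\<in>Cs. lin_indpt (rep_part X \<union> ch ` (L \<inter> X \<times> {..<alpha})) \<and>
       card (rep_part X) + card (L \<inter> X \<times> {..<alpha}) \<le> card (rep_part X \<union> ch ` (L \<inter> X \<times> {..<alpha}))"
    using generic_choice_lin_indpt[of L Cs "\<lambda>_. carrier V" rep_part "\<lambda>X. X \<times> {..<alpha}"]
      rep_part_carrier finite_rep_part rep_part_lin_indpt
      finite_subsets_of_nodes[of "{..<n}"] card_subsets_of_nodes_less[of "{..<n}"]
    unfolding L_def Cs_def by auto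
  define s where "s i = map (\<lambda>t. ch (i, t)) [0..<alpha]" for i
  have "stored s X = ch ` (X \<times> {..<alpha})" for X
    unfolding stored_def s_def by auto
  then have "lin_indpt (collected s X) \<and> card (rep_part X) + card X * alpha \<le> card (collected s X)"
    if "X \<subseteq> {..<n}" "card X \<le> k" "k \<le> card X + 1" for X
    using that ch(2) slots[of X] unfolding collected_def Cs_def by (auto simp: card_cartesian_product)
  moreover have "\<forall>i<n. length (s i) = alpha \<and> set (s i) \<subseteq> carrier V"
    using ch(1) span_carrier unfolding s_def L_def by auto
  ultimately show ?thesis using admissibleI by blast
qed

definition repair_sets :: "nat \<Rightarrow> nat set set" where
  "repair_sets f = {X. X \<subseteq> {..<n} - {f} \<and> card X < k \<and> k \<le> card X + 2}"

lemma repair_setsD: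
  assumes "X \<in> repair_sets f" "f < n"
  shows "X \<subseteq> {..<n}" "f \<notin> X" "finite X" "card X < k" "k \<le> card X + 2"
    and "card ({..<n} - {f} - X) = n - 1 - card X"
proof -
  show X: "X \<subseteq> {..<n}" "f \<notin> X" "card X < k" "k \<le> card X + 2"
    using assms(1) unfolding repair_sets_def by auto
  show "finite X" using X(1) finite_subset by blast
  then show "card ({..<n} - {f} - X) = n - 1 - card X"
    using X(1,2) assms(2) by (simp add: card_Diff_subset Diff_insert2[symmetric])
qed

text \<open>The count behind both repair rounds: the repairing node and the \<open>n - 1 - x\<close> helpers outside a
  set of \<open>x \<in> {k - 2, k - 1}\<close> surviving nodes deliver exactly the rank of one more complete node,
  plus the share of the repairing node that is still required.\<close>

lemma repair_balance:
  assumes "x < k" "k \<le> x + 2"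
  shows "(if x + 1 < k then beta else 0) + alpha = beta + (n - 1 - x) * beta"
proof (cases "x + 1 < k")
  case True
  then have "n - 1 - x = n - k + 1" using assms k_less_n by linarith
  then show ?thesis using True alpha_eq by simp
next
  case False
  then have "n - 1 - x = n - k" using assms by linarith
  moreover have "n - k + 1 = Suc (n - k)" by simp
  ultimately show ?thesis using False alpha_eq by (simp only: if_False) simp
qed

lemma card_collected_insert_ge:
  assumes adm: "admissible s" and f: "f < n" and X: "X \<in> repair_sets f" and j: "j \<in> {..<n} - {f} - X"
  shows "card (collected s X) + card ({..<n} - {f} - X) * beta \<le> card (collected s (insert j X))"
proof -
  note X' = repair_setsD[OF X f]
  have jX: "insert j X \<subseteq> {..<n}" "card (insert j X) = card X + 1"
    using j X' by auto
  have "card (collected s X) + card ({..<n} - {f} - X) * beta \<le> beta + card X * alpha + (n - 1 - card X) * beta"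
    using card_collected_le[OF adm X'(1)] X'(4) X'(6) by (simp add: card_rep_part)
  also have "\<dots> = card (rep_part (insert j X)) + card (insert j X) * alpha"
    using repair_balance[OF X'(4,5)] jX(2) by (simp add: card_rep_part)
  also have "\<dots> \<le> card (collected s (insert j X))"
    using admissible_collected(2)[OF adm jX(1)] jX(2) X'(4) by simp
  finally show ?thesis .
qed

lemma card_repair_base_le:
  assumes adm: "admissible s" and f: "f < n" and X: "X \<in> repair_sets f"
  shows "card (rep_part (insert f X) \<union> stored s X) + alpha
           \<le> card (collected s X) + card ({..<n} - {f} - X) * beta"
proof -
  note X' = repair_setsD[OF X f]
  have "card (stored s X) \<le> card X * alpha"
    using adm X'(1,3) unfolding admissible_def by (intro card_stored_le) auto
  then have "card (rep_part (insert f X) \<union> stored s X) + alpha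
      \<le> (if card X + 1 < k then beta else 0) + card X * alpha + alpha"
    using card_Un_le[of "rep_part (insert f X)" "stored s X"] X'(2,3) by (simp add: card_rep_part)
  also have "\<dots> = beta + card X * alpha + card ({..<n} - {f} - X) * beta"
    using repair_balance[OF X'(4,5)] X'(6) by simp
  also have "\<dots> \<le> card (collected s X) + card ({..<n} - {f} - X) * beta"
    using admissible_collected(2)[OF adm X'(1)] X'(4) by (simp add: card_rep_part)
  finally show ?thesis .
qed

lemma repair_messages_exist:
  assumes adm: "admissible s" and f: "f < n"
  defines "H \<equiv> {..<n} - {f}"
  shows "\<exists>msg. (\<forall>l\<in>H \<times> {..<beta}. msg l \<in> span (set (s (fst l)))) \<and>
    (\<forall>X\<in>repair_sets f. lin_indpt (collected s X \<union> msg ` (H \<times> {..<beta} \<inter> (H - X) \<times> UNIV)) \<and>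
       card (collected s X) + card (H \<times> {..<beta} \<inter> (H - X) \<times> UNIV)
         \<le> card (collected s X \<union> msg ` (H \<times> {..<beta} \<inter> (H - X) \<times> UNIV)))"
proof (rule generic_choice_lin_indpt)
  have node_V: "set (s j) \<subseteq> carrier V" if "j < n" for j
    using adm that unfolding admissible_def by blast
  show "finite (repair_sets f)" "card (repair_sets f) < card (carrier R)"
    unfolding repair_sets_def using finite_subsets_of_nodes card_subsets_of_nodes_less by auto
  show "finite (H \<times> {..<beta})" unfolding H_def by simp
  show "set (s (fst l)) \<subseteq> carrier V" if "l \<in> H \<times> {..<beta}" for l
    using that node_V[of "fst l"] unfolding H_def by auto
  show "collected s X \<subseteq> carrier V \<and> finite (collected s X) \<and> lin_indpt (collected s X)"
    if "X \<in> repair_sets f" for X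
    using admissible_collected[OF adm repair_setsD(1)[OF that f]] repair_setsD(4)[OF that f] by simp
  \<comment> \<open>a message of node \<open>j\<close> may be any combination of its content, which adds node \<open>j\<close> to \<open>X\<close>\<close>
  show "\<exists>G \<subseteq> span (set (s (fst l)) \<union> collected s X). finite G \<and> lin_indpt G \<and>
      card (collected s X) + card (H \<times> {..<beta} \<inter> (H - X) \<times> UNIV) \<le> card G"
    if X: "X \<in> repair_sets f" and lH: "l \<in> H \<times> {..<beta}" and lX: "l \<in> (H - X) \<times> UNIV" for X l
  proof -
    note X' = repair_setsD[OF X f]
    obtain j t where l: "l = (j, t)" "j \<in> H - X" using lH lX by auto
    have jX: "insert j X \<subseteq> {..<n}" "card (insert j X) \<le> k"
      using l(2) X' unfolding H_def by auto
    have "collected s (insert j X) \<subseteq> set (s j) \<union> collected s X"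
      using X'(4) jX unfolding collected_def rep_part_def stored_insert by auto
    also have "\<dots> \<subseteq> span (set (s j) \<union> collected s X)"
      using node_V l(2) admissible_collected(3)[OF adm X'(1)] X'(4) unfolding H_def by (intro in_own_span) auto
    finally have sub: "collected s (insert j X) \<subseteq> span (set (s (fst l)) \<union> collected s X)" using l(1) by simp
    have "H \<times> {..<beta} \<inter> (H - X) \<times> UNIV = (H - X) \<times> {..<beta}" by blast
    then have "card (collected s X) + card (H \<times> {..<beta} \<inter> (H - X) \<times> UNIV) \<le> card (collected s (insert j X))"
      using card_collected_insert_ge[OF adm f X] l(2) unfolding H_def by (simp add: card_cartesian_product)
    then show ?thesis using sub admissible_collected(1,4)[OF adm jX]
      by (intro exI[of _ "collected s (insert j X)"] conjI) simp_all
  qed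
qed

lemma repair_node_exists:
  assumes adm: "admissible s" and f: "f < n"
    and msg_V: "msg ` (({..<n} - {f}) \<times> {..<beta}) \<subseteq> carrier V"
    and msg_indpt: "\<forall>X\<in>repair_sets f. lin_indpt (collected s X \<union> msg ` (({..<n} - {f} - X) \<times> {..<beta})) \<and>
       card (collected s X) + card ({..<n} - {f} - X) * beta
         \<le> card (collected s X \<union> msg ` (({..<n} - {f} - X) \<times> {..<beta}))"
  defines "W \<equiv> set rep \<union> msg ` (({..<n} - {f}) \<times> {..<beta})"
  shows "\<exists>new. (\<forall>t\<in>{..<alpha}. new t \<in> span W) \<and>
    (\<forall>X\<in>repair_sets f. lin_indpt ((rep_part (insert f X) \<union> stored s X) \<union> new ` ({..<alpha} \<inter> UNIV)) \<and>
       card (rep_part (insert f X) \<union> stored s X) + card ({..<alpha} \<inter> UNIV)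
         \<le> card ((rep_part (insert f X) \<union> stored s X) \<union> new ` ({..<alpha} \<inter> UNIV)))"
proof (rule generic_choice_lin_indpt)
  have W_V: "W \<subseteq> carrier V" using rep_carrier msg_V unfolding W_def by blast
  then show "\<And>t. t \<in> {..<alpha} \<Longrightarrow> W \<subseteq> carrier V" by blast
  show "finite {..<alpha}" by simp
  show "finite (repair_sets f)" "card (repair_sets f) < card (carrier R)"
    unfolding repair_sets_def using finite_subsets_of_nodes card_subsets_of_nodes_less by auto
  show "rep_part (insert f X) \<union> stored s X \<subseteq> carrier V \<and> finite (rep_part (insert f X) \<union> stored s X) \<and>
      lin_indpt (rep_part (insert f X) \<union> stored s X)" if X: "X \<in> repair_sets f" for X
  proof -
    have "card X \<le> k" using repair_setsD(4)[OF X f] by simp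
    note coll = admissible_collected[OF adm repair_setsD(1)[OF X f] this]
    have "rep_part (insert f X) \<union> stored s X \<subseteq> collected s X"
      using repair_setsD(4)[OF X f] unfolding collected_def rep_part_def by auto
    then show ?thesis using coll subset_li_is_li finite_subset by blast
  qed
  \<comment> \<open>the messages received from the nodes outside \<open>X\<close> already have the required rank\<close>
  show "\<exists>G \<subseteq> span (W \<union> (rep_part (insert f X) \<union> stored s X)). finite G \<and> lin_indpt G \<and>
      card (rep_part (insert f X) \<union> stored s X) + card ({..<alpha} \<inter> UNIV) \<le> card G"
    if X: "X \<in> repair_sets f" for X
  proof (intro exI conjI)
    note X' = repair_setsD[OF X f]
    let ?G = "collected s X \<union> msg ` (({..<n} - {f} - X) \<times> {..<beta})"
    have "?G \<subseteq> W \<union> (rep_part (insert f X) \<union> stored s X)"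
      using X'(4) unfolding W_def collected_def rep_part_def by auto
    also have "\<dots> \<subseteq> span (W \<union> (rep_part (insert f X) \<union> stored s X))"
      using W_V admissible_collected(3)[OF adm X'(1)] X'(4) rep_part_carrier
      unfolding collected_def by (intro in_own_span) auto
    finally show "?G \<subseteq> span (W \<union> (rep_part (insert f X) \<union> stored s X))" .
    show "finite ?G" "lin_indpt ?G"
      using msg_indpt X admissible_collected(4)[OF adm X'(1)] X'(4) by auto
    show "card (rep_part (insert f X) \<union> stored s X) + card ({..<alpha} \<inter> UNIV) \<le> card ?G"
      using card_repair_base_le[OF adm f X] conjunct2[OF bspec[OF msg_indpt X]] by simp
  qed
qed

lemma admissible_repaired:
  assumes adm: "admissible s" and f: "f < n"
    and xs: "length xs = alpha" "set xs \<subseteq> carrier V"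
    and indpt: "\<forall>X\<in>repair_sets f. lin_indpt (rep_part (insert f X) \<union> stored s X \<union> set xs) \<and>
       card (rep_part (insert f X) \<union> stored s X) + alpha \<le> card (rep_part (insert f X) \<union> stored s X \<union> set xs)"
  shows "admissible (s(f := xs))"
proof (rule admissibleI)
  show "\<forall>i<n. length ((s(f := xs)) i) = alpha \<and> set ((s(f := xs)) i) \<subseteq> carrier V"
    using adm xs unfolding admissible_def by auto
  fix X assume X: "X \<subseteq> {..<n}" "card X \<le> k" "k \<le> card X + 1"
  show "lin_indpt (collected (s(f := xs)) X) \<and> card (rep_part X) + card X * alpha \<le> card (collected (s(f := xs)) X)"
  proof (cases "f \<in> X")
    case False
    then have "collected (s(f := xs)) X = collected s X"
      by (simp add: collected_def stored_fun_upd)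
    then show ?thesis using adm X unfolding admissible_def by simp
  next
    case True
    define T where "T = X - {f}"
    have fin: "finite X" using X(1) finite_subset by blast
    have XT: "X = insert f T" "f \<notin> T" "card X = card T + 1"
      using True card.remove[OF fin True] unfolding T_def by auto
    have T_nodes: "T \<subseteq> {..<n}" "card T < k" using X(1,2) XT unfolding T_def by auto
    have T: "T \<in> repair_sets f"
      using X XT(3) T_nodes unfolding repair_sets_def T_def by auto
    have coll: "collected (s(f := xs)) X = (rep_part X \<union> stored s T) \<union> set xs"
      using XT(1,2) by (auto simp: collected_def stored_insert stored_fun_upd)
    have "card (rep_part X) + card X * alpha \<le> card (rep_part X \<union> stored s T) + alpha"
      using admissible_card_Un_stored[OF adm T_nodes rep_part_subset] XT(3) by simp
    moreover have "lin_indpt (rep_part X \<union> stored s T \<union> set xs) \<and>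
        card (rep_part X \<union> stored s T) + alpha \<le> card (rep_part X \<union> stored s T \<union> set xs)"
      using indpt T unfolding XT(1) by blast
    ultimately show ?thesis unfolding coll by linarith
  qed
qed

lemma repair_step_fun_upd:
  assumes adm: "admissible s" and f: "f < n"
    and msg_span: "\<forall>l\<in>({..<n} - {f}) \<times> {..<beta}. msg l \<in> span (set (s (fst l)))"
    and new_span: "\<forall>t<alpha. new t \<in> span (set rep \<union> msg ` (({..<n} - {f}) \<times> {..<beta}))"
    and msg_V: "msg ` (({..<n} - {f}) \<times> {..<beta}) \<subseteq> carrier V"
  shows "repair_step R M n alpha beta rep s f (s(f := map new [0..<alpha]))"
  unfolding repair_step_def
proof (intro conjI exI[of _ "\<lambda>i. map (\<lambda>t. msg (i, t)) [0..<beta]"] exI[of _ rep])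
  have node_V: "set (s j) \<subseteq> carrier V" if "j < n" for j
    using adm that unfolding admissible_def by blast
  show "\<forall>i<n. i \<noteq> f \<longrightarrow> length (map (\<lambda>t. msg (i, t)) [0..<beta]) = beta \<and>
      (\<forall>u\<in>set (map (\<lambda>t. msg (i, t)) [0..<beta]). in_span R M (set (s i)) u)"
    using msg_span in_span_if_mem_span[OF node_V] by auto
  show "\<forall>u\<in>set rep. in_span R M (set rep) u"
    using in_span_if_mem_span[OF rep_carrier] in_own_span[OF rep_carrier] by blast
  have "(\<Union>i\<in>{..<n} - {f}. set (map (\<lambda>t. msg (i, t)) [0..<beta])) \<union> set rep
      = set rep \<union> msg ` (({..<n} - {f}) \<times> {..<beta})"
    by auto
  moreover have "set rep \<union> msg ` (({..<n} - {f}) \<times> {..<beta}) \<subseteq> carrier V"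
    using rep_carrier msg_V by blast
  ultimately show "\<forall>u\<in>set ((s(f := map new [0..<alpha])) f). in_span R M
      ((\<Union>i\<in>{..<n} - {f}. set (map (\<lambda>t. msg (i, t)) [0..<beta])) \<union> set rep) u"
    using new_span in_span_if_mem_span by auto
qed (use f length_rep in simp_all)

lemma repair_exists:
  assumes adm: "admissible s" and f: "f < n"
  shows "\<exists>s'. repair_step R M n alpha beta rep s f s' \<and> admissible s'"
proof -
  let ?H = "{..<n} - {f}"
  have HX: "?H \<times> {..<beta} \<inter> (?H - X) \<times> UNIV = (?H - X) \<times> {..<beta}" for X
    by blast
  from repair_messages_exist[OF adm f, unfolded HX card_cartesian_product card_lessThan]
  obtain msg where msg_span: "\<forall>l\<in>?H \<times> {..<beta}. msg l \<in> span (set (s (fst l)))"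
    and msg_indpt: "\<forall>X\<in>repair_sets f. lin_indpt (collected s X \<union> msg ` ((?H - X) \<times> {..<beta})) \<and>
       card (collected s X) + card (?H - X) * beta \<le> card (collected s X \<union> msg ` ((?H - X) \<times> {..<beta}))"
    by blast
  have "msg l \<in> carrier V" if l: "l \<in> ?H \<times> {..<beta}" for l
  proof -
    have "fst l < n" using l by auto
    then have "set (s (fst l)) \<subseteq> carrier V" using adm unfolding admissible_def by blast
    then show ?thesis using msg_span l span_closed by blast
  qed
  then have msg_V: "msg ` (?H \<times> {..<beta}) \<subseteq> carrier V" by blast
  from repair_node_exists[OF adm f msg_V msg_indpt, unfolded Int_UNIV_right card_lessThan]
  obtain new where new_span: "\<forall>t\<in>{..<alpha}. new t \<in> span (set rep \<union> msg ` (?H \<times> {..<beta}))"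
    and new_indpt: "\<forall>X\<in>repair_sets f. lin_indpt (rep_part (insert f X) \<union> stored s X \<union> new ` {..<alpha}) \<and>
       card (rep_part (insert f X) \<union> stored s X) + alpha \<le> card (rep_part (insert f X) \<union> stored s X \<union> new ` {..<alpha})"
    by blast
  have W_V: "set rep \<union> msg ` (?H \<times> {..<beta}) \<subseteq> carrier V" using rep_carrier msg_V by blast
  have "set (map new [0..<alpha]) \<subseteq> carrier V"
    using new_span span_closed[OF W_V] by auto
  then have "admissible (s(f := map new [0..<alpha]))"
    using admissible_repaired[OF adm f] new_indpt by (simp add: atLeast0LessThan)
  moreover have "repair_step R M n alpha beta rep s f (s(f := map new [0..<alpha]))"
    using repair_step_fun_upd[OF adm f msg_span _ msg_V] new_span by simp
  ultimately show ?thesis by blast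
qed

definition repair_strategy :: "(nat \<Rightarrow> 'a cvec list) \<Rightarrow> nat \<Rightarrow> nat \<Rightarrow> 'a cvec list" where
  "repair_strategy s f =
     (if admissible s \<and> f < n then SOME s'. repair_step R M n alpha beta rep s f s' \<and> admissible s' else s)"

lemma repair_strategy_step:
  assumes "admissible s" "f < n"
  shows "repair_step R M n alpha beta rep s f (repair_strategy s f)"
    and "admissible (repair_strategy s f)"
  using someI_ex[OF repair_exists[OF assms]] assms unfolding repair_strategy_def by simp_all

lemma admissible_run: "admissible s \<Longrightarrow> admissible (run repair_strategy s fs)"
proof (induction fs arbitrary: s)
  case (Cons f fs)
  have "admissible (repair_strategy s f)"
    using Cons.prems repair_strategy_step(2)[of s f] unfolding repair_strategy_def by (cases "f < n") auto
  then show ?case using Cons.IH by simp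
qed simp

theorem functional_repair_code_exists:
  "\<exists>nodes0 r strat. storage_ok R M n alpha nodes0 \<and> length r = beta \<and> (\<forall>v\<in>set r. is_vec R M v) \<and>
     reconstructs R M n k nodes0 \<and>
     (\<forall>fs. \<forall>f<n. repair_step R M n alpha beta r (run strat nodes0 fs) f (strat (run strat nodes0 fs) f) \<and>
                reconstructs R M n k (strat (run strat nodes0 fs) f))"
proof -
  obtain s where s: "admissible s" using admissible_exists by blast
  have "storage_ok R M n alpha s"
    using s is_vec_if_carrier unfolding admissible_def storage_ok_def by blast
  moreover have "\<forall>v\<in>set rep. is_vec R M v" using rep_carrier is_vec_if_carrier by blast
  moreover have "repair_step R M n alpha beta rep (run repair_strategy s fs) f (repair_strategy (run repair_strategy s fs) f) \<and>
      reconstructs R M n k (repair_strategy (run repair_strategy s fs) f)" if "f < n" for fs f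
    using repair_strategy_step[OF admissible_run[OF s] that] admissible_reconstructs by blast
  ultimately show ?thesis
    using admissible_reconstructs[OF s] length_rep
    by (intro exI[of _ s] exI[of _ rep] exI[of _ repair_strategy]) simp
qed

end

lemma dss_code_func_space:
  fixes R :: "'a ring"
  assumes "field R" "1 \<le> k" "k < n" "alpha = (n - k + 1) * beta" "M = k * alpha"
    and "2 ^ n < card (carrier R)"
  shows "dss_code R (ring.func_space R {..<M}) M n k alpha beta"
proof -
  interpret field R by fact
  have "vectorspace R (func_space {..<M})"
    unfolding vectorspace_def using func_space_is_module field_axioms by simp
  then show ?thesis
    unfolding dss_code_def dss_code_axioms_def coordinate_space_def coordinate_space_axioms_def
    using assms by auto
qed

theorem proposition3:
  fixes n k d h M alpha alpha' beta :: nat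
  assumes "1 \<le> k" and "k \<le> n - 1"
    and "d = n - 1" and "h = 1"
    and "k * alpha = M"
    and "k * (d - k + 2) * beta = M" and "beta > 0"
    and "alpha' = beta"
  shows "\<exists>Q::nat. \<forall>R :: 'a ring.
           field R \<longrightarrow> finite (carrier R) \<longrightarrow> Q \<le> card (carrier R) \<longrightarrow>
           (\<exists>(nodes0 :: nat \<Rightarrow> 'a cvec list) (rep :: 'a cvec list) strat.
              storage_ok R M n alpha nodes0 \<and>
              length rep = alpha' \<and> (\<forall>v\<in>set rep. is_vec R M v) \<and>
              reconstructs R M n k nodes0 \<and>
              (\<forall>fs. set fs \<subseteq> {..<n} \<longrightarrow>
                 (\<forall>f<n. repair_step R M n alpha beta rep (run strat nodes0 fs) f
                          (strat (run strat nodes0 fs) f) \<and>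
                        reconstructs R M n k (strat (run strat nodes0 fs) f))))"
proof (intro exI[of _ "2 ^ n + 1"] allI impI)
  fix R :: "'a ring"
  assume R: "field R" "finite (carrier R)" "2 ^ n + 1 \<le> card (carrier R)"
  have "d - k + 2 = n - k + 1" using assms(1-3) by linarith
  then have "k * alpha = k * ((n - k + 1) * beta)"
    using assms(5,6) by (metis mult.assoc)
  then have alpha: "alpha = (n - k + 1) * beta" using assms(1) by simp
  have "dss_code R (ring.func_space R {..<M}) M n k alpha beta"
    by (rule dss_code_func_space[OF R(1)]) (use assms(1,2,5) alpha R(3) in auto)
  then obtain nodes0 rep strat where "storage_ok R M n alpha nodes0" "length rep = beta"
    "\<forall>v\<in>set rep. is_vec R M v" "reconstructs R M n k nodes0"
    "\<forall>fs. \<forall>f<n. repair_step R M n alpha beta rep (run strat nodes0 fs) f (strat (run strat nodes0 fs) f) \<and>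
        reconstructs R M n k (strat (run strat nodes0 fs) f)"
    using dss_code.functional_repair_code_exists by blast
  then show "\<exists>nodes0 rep strat. storage_ok R M n alpha nodes0 \<and>
      length rep = alpha' \<and> (\<forall>v\<in>set rep. is_vec R M v) \<and> reconstructs R M n k nodes0 \<and>
      (\<forall>fs. set fs \<subseteq> {..<n} \<longrightarrow> (\<forall>f<n. repair_step R M n alpha beta rep (run strat nodes0 fs) f
         (strat (run strat nodes0 fs) f) \<and> reconstructs R M n k (strat (run strat nodes0 fs) f)))"
    using assms(8) by (intro exI[of _ nodes0] exI[of _ rep] exI[of _ strat]) simp
qed

end
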